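(* $17\notin\operatorname{Spec}(32_{65})$.
   Context: $32_{65}$ is the finite integral symmetric relation algebra with atoms $1'$, $a$, $b$, $c$, all symmetric, in which a diversity cycle $xyz$ (with $x,y,z\in\{a,b,c\}$) is mandatory (i.e. $x;y\ge z$) if it involves $a$ and forbidden (i.e. $x;y\cdot z=0$) otherwise. A representation over a set $U$ is an embedding into the full relation algebra on $U\times U$. $\operatorname{Spec}(A)$ is the set of cardinals $\alpha\le\omega$ such that $A$ has a representation over a set of cardinality $\alpha$. *)

theory Defs
  imports Main
begin

datatype atom = One | At_a | At_b | At_c

text \<open>All atoms are symmetric.  For diversity atoms x y z, the cycle xyz is mandatory
  (x;y \<ge> z) iff it involves a, and forbidden otherwise.  x;y \<ge> 1' iff y = x (converse of x).\<close>
fun atom_comp :: "atom \<Rightarrow> atom \<Rightarrow> atom set" where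
  "atom_comp One y = {y}"
| "atom_comp x One = {x}"
| "atom_comp x y =
     {z. (z = One \<and> x = y) \<or>
         (z \<noteq> One \<and> (x = At_a \<or> y = At_a \<or> z = At_a))}"

text \<open>The (complex) algebra: elements are sets of atoms.\<close>
definition ra_comp :: "atom set \<Rightarrow> atom set \<Rightarrow> atom set" where
  "ra_comp S T = (\<Union>x\<in>S. \<Union>y\<in>T. atom_comp x y)"

definition ra_conv :: "atom set \<Rightarrow> atom set" where
  "ra_conv S = S"

definition ra_id :: "atom set" where
  "ra_id = {One}"

definition representation :: "'u set \<Rightarrow> (atom set \<Rightarrow> ('u \<times> 'u) set) \<Rightarrow> bool" where
  "representation U h \<longleftrightarrow>
     inj h \<and>
     (\<forall>S. h S \<subseteq> U \<times> U) \<and>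
     (\<forall>S T. h (S \<union> T) = h S \<union> h T) \<and>
     (\<forall>S. h (- S) = (U \<times> U) - h S) \<and>
     (\<forall>S T. h (ra_comp S T) = h S O h T) \<and>
     (\<forall>S. h (ra_conv S) = converse (h S)) \<and>
     h ra_id = Id_on U"

text \<open>Finite part of the spectrum: sizes n of finite sets over which 32_65 is representable
  (any finite set is in bijection with a set of naturals of the same size).\<close>
definition spec_fin :: "nat set" where
  "spec_fin = {n. \<exists>(U::nat set) h. finite U \<and> card U = n \<and> representation U h}"

end

theory Submission
  imports Defs
begin

text \<open>Fix a point x of a finite representation and let P, Q, R be its sets of b-, c- and
  a-neighbours; together with x they partition U.  The forbidden cycles say that two steps along
  b or c between distinct points always end in an a-edge; the mandatory cycles then force every
  point to have at least four b- and four c-neighbours.  So each y \<in> P has at least 7 neighbours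
  along b or c inside R, while each w \<in> R misses some point of P, because a;b \<ge> a gives an
  a-edge from w into P.  Counting the b/c-edges between P and R yields
  7|P| \<le> |R|(|P| - 1), which together with |P|, |Q| \<ge> 4 forces |U| = 1 + |P| + |Q| + |R| \<ge> 19.\<close>

lemma card_le_mult_by_double_counting:
  fixes E :: "('a \<times> 'b) set"
  assumes "finite P" "finite R"
    and "\<And>y. y \<in> P \<Longrightarrow> m \<le> card {w \<in> R. (y, w) \<in> E}"
    and "\<And>w. w \<in> R \<Longrightarrow> card {y \<in> P. (y, w) \<in> E} \<le> k"
  shows "m * card P \<le> k * card R"
proof -
  have "m * card P \<le> (\<Sum>y\<in>P. card {w \<in> R. (y, w) \<in> E})"
    using sum_mono[of P "\<lambda>_. m"] assms(3) by (simp add: mult.commute)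
  also have "\<dots> = (\<Sum>y\<in>P. \<Sum>w\<in>R. of_bool ((y, w) \<in> E))"
    using assms(2) by (simp add: sum_of_bool_eq Collect_conj_eq)
  also have "\<dots> = (\<Sum>w\<in>R. \<Sum>y\<in>P. of_bool ((y, w) \<in> E))"
    by (rule sum.swap)
  also have "\<dots> = (\<Sum>w\<in>R. card {y \<in> P. (y, w) \<in> E})"
    using assms(1) by (simp add: sum_of_bool_eq Collect_conj_eq)
  also have "\<dots> \<le> k * card R"
    using sum_mono[of R _ "\<lambda>_. k"] assms(4) by (simp add: mult.commute)
  finally show ?thesis .
qed

lemma ge_19_if_double_count:
  fixes p q r :: nat
  assumes "4 \<le> p" "4 \<le> q" "7 * p \<le> r * (p - 1)"
  shows "19 \<le> 1 + p + q + r"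
proof (rule ccontr)
  assume "\<not> 19 \<le> 1 + p + q + r"
  hence "r \<le> 13 - p" "p \<le> 13" using assms(2) by linarith+
  hence "r * (p - 1) \<le> (13 - p) * (p - 1)" by (intro mult_right_mono) auto
  hence "int (r * (p - 1)) \<le> int ((13 - p) * (p - 1))" by (simp only: of_nat_le_iff)
  also have "\<dots> = (13 - int p) * (int p - 1)"
    using \<open>p \<le> 13\<close> assms(1) by (simp add: of_nat_diff)
  also have "\<dots> = 7 * int p - ((int p - 4) * (int p - 3) + 1)"
    by (simp add: algebra_simps)
  also have "\<dots> < 7 * int p"
    using assms(1) mult_nonneg_nonneg[of "int p - 4" "int p - 3"] by linarith
  finally show False using assms(3) by linarith
qed

lemma atom_cases: "z = One \<or> z = At_a \<or> z = At_b \<or> z = At_c"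
  by (cases z) auto

lemma atom_comp_bc_subset: "x \<in> {At_b, At_c} \<Longrightarrow> y \<in> {At_b, At_c} \<Longrightarrow> atom_comp x y \<subseteq> {One, At_a}"
  by auto

lemma At_a_mem_atom_comp: "x \<noteq> One \<Longrightarrow> y \<noteq> One \<Longrightarrow> At_a \<in> atom_comp x y"
  by (cases x; cases y) auto

locale represented =
  fixes U :: "'u set" and h :: "atom set \<Rightarrow> ('u \<times> 'u) set"
  assumes representation: "representation U h"
begin

lemma h_subset: "h S \<subseteq> U \<times> U"
  using representation unfolding representation_def by simp

lemma h_Un: "h (S \<union> T) = h S \<union> h T"
  using representation unfolding representation_def by simp

lemma h_Compl: "h (- S) = U \<times> U - h S"
  using representation unfolding representation_def by simp

lemma h_ra_comp: "h (ra_comp S T) = h S O h T"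
  using representation unfolding representation_def by simp

lemma h_One: "h {One} = Id_on U"
  using representation unfolding representation_def ra_id_def by simp

lemma h_inj: "inj h"
  using representation unfolding representation_def by simp

lemma h_converse: "h S = converse (h S)"
  using representation unfolding representation_def ra_conv_def by (elim conjE allE) assumption

lemma h_sym: "(u, v) \<in> h S \<Longrightarrow> (v, u) \<in> h S"
  using h_converse[of S] by (metis converse_iff)

lemma h_mono:
  assumes "S \<subseteq> T"
  shows "h S \<subseteq> h T"
proof -
  have "h T = h S \<union> h T" using h_Un[of S T] assms by (simp add: Un_absorb1)
  thus ?thesis by blast
qed

lemma h_disjoint: "S \<inter> T = {} \<Longrightarrow> h S \<inter> h T = {}"
  using h_mono[of S "- T"] h_Compl[of T] by blast

lemma h_atom_comp: "h {x} O h {y} = h (atom_comp x y)"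
proof -
  have "ra_comp {x} {y} = atom_comp x y" by (simp add: ra_comp_def)
  thus ?thesis using h_ra_comp[of "{x}" "{y}"] by simp
qed

lemma atom_unique:
  assumes "(u, v) \<in> h {z}" "(u, v) \<in> h {z'}"
  shows "z = z'"
proof (rule ccontr)
  assume "z \<noteq> z'"
  hence "h {z} \<inter> h {z'} = {}" by (intro h_disjoint) simp
  thus False using assms by blast
qed

lemma diversity_edge:
  assumes "u \<in> U" "v \<in> U" "u \<noteq> v"
  shows "(u, v) \<in> h {At_a} \<union> h {At_b} \<union> h {At_c}"
proof -
  have atoms: "(UNIV :: atom set) = {One} \<union> {At_a} \<union> {At_b} \<union> {At_c}"
    using atom_cases by blast
  have "h UNIV = U \<times> U"
    using h_Compl[of "{}"] h_disjoint[of "{}" "{}"] by simp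
  hence "(u, v) \<in> h UNIV" using assms(1,2) by simp
  hence "(u, v) \<in> h {One} \<union> h {At_a} \<union> h {At_b} \<union> h {At_c}"
    by (simp only: atoms h_Un)
  moreover have "(u, v) \<notin> h {One}" by (simp add: h_One Id_on_iff assms(3))
  ultimately show ?thesis by blast
qed

lemma mandatory_triangle:
  assumes "(u, v) \<in> h {z}" "z \<in> atom_comp x y"
  obtains k where "(u, k) \<in> h {x}" "(k, v) \<in> h {y}"
proof -
  have "h {z} \<subseteq> h (atom_comp x y)" using assms(2) by (intro h_mono) simp
  thus thesis using assms(1) that h_atom_comp[of x y] by blast
qed

lemma At_a_edge_exists:
  assumes "u \<in> U"
  obtains w where "(u, w) \<in> h {At_a}"
  using mandatory_triangle[of u u One At_a At_a] assms h_One by auto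

lemma bc_path_At_a:
  assumes "(u, v) \<in> h {x}" "(v, w) \<in> h {y}" "x \<in> {At_b, At_c}" "y \<in> {At_b, At_c}" "u \<noteq> w"
  shows "(u, w) \<in> h {At_a}"
proof -
  have "(u, w) \<in> h (atom_comp x y)" using assms(1,2) h_atom_comp by blast
  also have "\<dots> \<subseteq> h {One, At_a}" by (rule h_mono[OF atom_comp_bc_subset[OF assms(3,4)]])
  also have "\<dots> = h {One} \<union> h {At_a}" using h_Un[of "{One}" "{At_a}"] by (simp add: insert_commute)
  finally show ?thesis using assms(5) h_One by auto
qed

definition nbhd :: "atom \<Rightarrow> 'u \<Rightarrow> 'u set" where
  "nbhd z u = {v. (u, v) \<in> h {z}}"

lemma finite_nbhd: "finite U \<Longrightarrow> finite (nbhd z u)"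
  unfolding nbhd_def using h_subset[of "{z}"] by (auto intro: finite_subset)

lemma nbhd_disjoint: "z \<noteq> z' \<Longrightarrow> nbhd z u \<inter> nbhd z' u = {}"
  unfolding nbhd_def using atom_unique by blast

lemma card_split:
  assumes "finite U" "u \<in> U"
  shows "card U = 1 + card (nbhd At_b u) + card (nbhd At_c u) + card (nbhd At_a u)"
proof -
  have "U = insert u (nbhd At_b u \<union> nbhd At_c u \<union> nbhd At_a u)"
    using assms(2) h_subset diversity_edge[OF assms(2)] unfolding nbhd_def by blast
  moreover have "u \<notin> nbhd At_b u \<union> nbhd At_c u \<union> nbhd At_a u"
    using assms(2) h_One atom_unique unfolding nbhd_def by blast
  moreover have "card (nbhd At_b u \<union> nbhd At_c u \<union> nbhd At_a u)
      = card (nbhd At_b u) + card (nbhd At_c u) + card (nbhd At_a u)"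
    using nbhd_disjoint[of At_b At_c u] nbhd_disjoint[of At_b At_a u]
      nbhd_disjoint[of At_c At_a u] finite_nbhd[OF assms(1)]
    by (simp add: card_Un_disjoint Int_Un_distrib2)
  ultimately show ?thesis using finite_nbhd[OF assms(1)] by simp
qed

lemma card_nbhd_ge_4:
  assumes "finite U" "x \<in> U"
    and bc: "x1 \<in> {At_b, At_c}" "x2 \<in> {At_b, At_c}" "x1 \<noteq> x2"
  shows "4 \<le> card (nbhd x1 x)"
proof -
  have ne: "x1 \<noteq> One" "x2 \<noteq> One" "x1 \<noteq> At_a" "x2 \<noteq> At_a" using bc by auto
  obtain w where xw: "(x, w) \<in> h {At_a}" using At_a_edge_exists assms(2) .
  obtain k1 where k1: "(x, k1) \<in> h {x1}" "(k1, w) \<in> h {x1}"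
    using mandatory_triangle[OF xw At_a_mem_atom_comp] ne by metis
  obtain k2 where k2: "(x, k2) \<in> h {x1}" "(k2, w) \<in> h {x2}"
    using mandatory_triangle[OF xw At_a_mem_atom_comp] ne by metis
  have "k1 \<noteq> k2" using k1 k2 atom_unique bc by blast
  hence k1k2: "(k1, k2) \<in> h {At_a}"
    using bc_path_At_a[OF h_sym[OF k1(1)] k2(1)] bc by blast
  obtain w' where w': "(k1, w') \<in> h {x2}" "(w', k2) \<in> h {x2}"
    using mandatory_triangle[OF k1k2 At_a_mem_atom_comp] ne by metis
  have "x \<noteq> w'" using k1 w' atom_unique h_sym bc by blast
  hence xw': "(x, w') \<in> h {At_a}"
    using bc_path_At_a[OF k1(1) w'(1)] bc by blast
  obtain k3 where k3: "(x, k3) \<in> h {x1}" "(k3, w') \<in> h {x1}"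
    using mandatory_triangle[OF xw' At_a_mem_atom_comp] ne by metis
  obtain k4 where k4: "(w', k4) \<in> h {At_a}" "(k4, x) \<in> h {x1}"
    using mandatory_triangle[OF h_sym[OF xw'] At_a_mem_atom_comp] ne atom.distinct(1) by metis
  \<comment> \<open>k1, k2 differ in their edges to w; k1 and k2, k3, k4 differ in their edges to w'.\<close>
  have "k1 \<noteq> k3" "k2 \<noteq> k3" "k1 \<noteq> k4" "k2 \<noteq> k4" "k3 \<noteq> k4"
    using k1 k2 k3 k4 w' atom_unique h_sym ne bc by blast+
  hence "card {k1, k2, k3, k4} = 4" using \<open>k1 \<noteq> k2\<close> by simp
  moreover have "{k1, k2, k3, k4} \<subseteq> nbhd x1 x"
    using k1 k2 k3 k4 h_sym unfolding nbhd_def by blast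
  ultimately show ?thesis
    using card_mono[OF finite_nbhd[OF assms(1)]] by metis
qed

definition bc_edges :: "('u \<times> 'u) set" where
  "bc_edges = h {At_b} \<union> h {At_c}"

lemma card_bc_edges_into_At_a_nbhd:
  assumes "finite U" "x \<in> U" "y \<in> nbhd At_b x"
  shows "7 \<le> card {w \<in> nbhd At_a x. (y, w) \<in> bc_edges}"
proof -
  define N where "N = nbhd At_b y \<union> nbhd At_c y"
  have yU: "y \<in> U" using assms(3) h_subset unfolding nbhd_def by blast
  have "8 \<le> card N"
    using card_nbhd_ge_4[OF assms(1) yU, of At_b At_c] card_nbhd_ge_4[OF assms(1) yU, of At_c At_b]
      nbhd_disjoint[of At_b At_c y] finite_nbhd[OF assms(1)]
    unfolding N_def by (simp add: card_Un_disjoint)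
  moreover have "card N \<le> Suc (card (N - {x}))"
    by (cases "x \<in> N") (simp_all add: card_Diff_singleton_if)
  moreover have "N - {x} \<subseteq> {w \<in> nbhd At_a x. (y, w) \<in> bc_edges}"
  proof
    fix w assume w: "w \<in> N - {x}"
    then obtain z where z: "z \<in> {At_b, At_c}" "(y, w) \<in> h {z}"
      unfolding N_def nbhd_def by blast
    have "(x, y) \<in> h {At_b}" using assms(3) unfolding nbhd_def by blast
    hence "(x, w) \<in> h {At_a}" using bc_path_At_a z w by blast
    thus "w \<in> {w \<in> nbhd At_a x. (y, w) \<in> bc_edges}"
      using z unfolding nbhd_def bc_edges_def by blast
  qed
  hence "card (N - {x}) \<le> card {w \<in> nbhd At_a x. (y, w) \<in> bc_edges}"
    using finite_nbhd[OF assms(1)] by (intro card_mono) auto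
  ultimately show ?thesis by linarith
qed

lemma card_bc_edges_from_At_b_nbhd:
  assumes "finite U" "w \<in> nbhd At_a x"
  shows "card {y \<in> nbhd At_b x. (y, w) \<in> bc_edges} \<le> card (nbhd At_b x) - 1"
proof -
  have "(w, x) \<in> h {At_a}" using assms(2) h_sym unfolding nbhd_def by blast
  then obtain k where k: "(w, k) \<in> h {At_a}" "(k, x) \<in> h {At_b}"
    using mandatory_triangle At_a_mem_atom_comp by (metis atom.distinct(1,3))
  have "k \<in> nbhd At_b x" using k(2) h_sym unfolding nbhd_def by blast
  have "{y \<in> nbhd At_b x. (y, w) \<in> bc_edges} \<subseteq> nbhd At_b x - {k}"
    using k(1) h_sym atom_unique unfolding bc_edges_def by blast
  hence "card {y \<in> nbhd At_b x. (y, w) \<in> bc_edges} \<le> card (nbhd At_b x - {k})"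
    using finite_nbhd[OF assms(1)] by (intro card_mono) auto
  also have "\<dots> = card (nbhd At_b x) - 1"
    using \<open>k \<in> nbhd At_b x\<close> by simp
  finally show ?thesis .
qed

theorem card_ge_19:
  assumes "finite U"
  shows "19 \<le> card U"
proof -
  have "U \<noteq> {}"
  proof
    assume "U = {}"
    hence "h {} = h UNIV" using h_subset by blast
    thus False using h_inj by (simp add: inj_eq)
  qed
  then obtain x where x: "x \<in> U" by blast
  have "7 * card (nbhd At_b x) \<le> (card (nbhd At_b x) - 1) * card (nbhd At_a x)"
    by (rule card_le_mult_by_double_counting[OF finite_nbhd[OF assms] finite_nbhd[OF assms]])
      (erule card_bc_edges_into_At_a_nbhd[OF assms x], erule card_bc_edges_from_At_b_nbhd[OF assms])
  hence "19 \<le> 1 + card (nbhd At_b x) + card (nbhd At_c x) + card (nbhd At_a x)"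
    using ge_19_if_double_count card_nbhd_ge_4[OF assms x, of At_b At_c]
      card_nbhd_ge_4[OF assms x, of At_c At_b] by (simp add: mult.commute)
  thus ?thesis using card_split[OF assms x] by simp
qed

end

theorem mainTheorem10:
  shows "(17::nat) \<notin> spec_fin"
proof
  assume "(17::nat) \<in> spec_fin"
  then obtain U :: "nat set" and h where "finite U" "card U = 17" "representation U h"
    unfolding spec_fin_def by blast
  thus False using represented.card_ge_19[OF represented.intro] by fastforce
qed

end
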